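(* In the setting of a finite MDP with tabular softmax policies and $\min_s\mu(s)>0$, let $C_\infty:=\max_\pi\|d_\mu^\pi/\mu\|_\infty$ and $\eta=\frac{1-\gamma}{6(1-\gamma)+8(C_\infty-(1-\gamma))}\cdot\frac{1}{\sqrt S}$. Let $\theta$ satisfy $\frac{\partial V^{\pi_\theta}(\mu)}{\partial\theta}\neq0$ and set $\theta'=\theta+\eta\,\frac{\partial V^{\pi_\theta}(\mu)}{\partial\theta}\Big/\Big\|\frac{\partial V^{\pi_\theta}(\mu)}{\partial\theta}\Big\|_2$. Then for every $\zeta\in[0,1]$, with $\theta_\zeta:=\theta+\zeta(\theta'-\theta)$, $$\Big\|\frac{\partial V^{\pi_{\theta_\zeta}}(\mu)}{\partial\theta_\zeta}\Big\|_2\le2\Big\|\frac{\partial V^{\pi_\theta}(\mu)}{\partial\theta}\Big\|_2.$$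
   Context: A finite MDP $(\mathcal{S},\mathcal{A},\mathcal{P},r,\gamma)$ with $S=|\mathcal{S}|$, rewards $r(s,a)\in[0,1]$, $\gamma\in[0,1)$; $V^\pi(s)$ is the expected discounted return from $s$ under $\pi$, $V^\pi(\mu)=\sum_s\mu(s)V^\pi(s)$; $d_\mu^\pi(s)=(1-\gamma)\sum_{t\ge0}\gamma^t\Pr(s_t=s\mid s_0\sim\mu,\pi,\mathcal{P})$. Tabular softmax policy: $\pi_\theta(a|s)=e^{\theta(s,a)}/\sum_{a'}e^{\theta(s,a')}$, $\theta\in\mathbb{R}^{\mathcal{S}\times\mathcal{A}}$. *)

theory Defs
  imports "HOL-Analysis.Analysis"
begin

definition is_policy :: "('s::finite \<Rightarrow> 'a::finite \<Rightarrow> real) \<Rightarrow> bool" where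
  "is_policy pol \<longleftrightarrow> (\<forall>s a. 0 \<le> pol s a) \<and> (\<forall>s. (\<Sum>a\<in>UNIV. pol s a) = 1)"

definition is_MDP :: "('s::finite \<Rightarrow> 'a::finite \<Rightarrow> 's \<Rightarrow> real) \<Rightarrow> ('s \<Rightarrow> 'a \<Rightarrow> real) \<Rightarrow> real \<Rightarrow> bool" where
  "is_MDP P r gamma \<longleftrightarrow>
     (\<forall>s a s'. 0 \<le> P s a s') \<and> (\<forall>s a. (\<Sum>s'\<in>UNIV. P s a s') = 1) \<and>
     (\<forall>s a. 0 \<le> r s a \<and> r s a \<le> 1) \<and> 0 \<le> gamma \<and> gamma < 1"

definition Ppi :: "('s::finite \<Rightarrow> 'a::finite \<Rightarrow> 's \<Rightarrow> real) \<Rightarrow> ('s \<Rightarrow> 'a \<Rightarrow> real) \<Rightarrow> 's \<Rightarrow> 's \<Rightarrow> real" where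
  "Ppi P pol s s' = (\<Sum>a\<in>UNIV. pol s a * P s a s')"

text \<open>sdist P pol nu t s = Pr(s_t = s | s_0 ~ nu, pol, P).\<close>
fun sdist :: "('s::finite \<Rightarrow> 'a::finite \<Rightarrow> 's \<Rightarrow> real) \<Rightarrow> ('s \<Rightarrow> 'a \<Rightarrow> real) \<Rightarrow> ('s \<Rightarrow> real) \<Rightarrow> nat \<Rightarrow> 's \<Rightarrow> real" where
  "sdist P pol nu 0 = nu"
| "sdist P pol nu (Suc t) = (\<lambda>s'. \<Sum>s\<in>UNIV. sdist P pol nu t s * Ppi P pol s s')"

definition Vs :: "('s::finite \<Rightarrow> 'a::finite \<Rightarrow> 's \<Rightarrow> real) \<Rightarrow> ('s \<Rightarrow> 'a \<Rightarrow> real) \<Rightarrow> real \<Rightarrow> ('s \<Rightarrow> 'a \<Rightarrow> real) \<Rightarrow> 's \<Rightarrow> real" where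
  "Vs P r gamma pol s =
     (\<Sum>t. gamma ^ t * (\<Sum>s'\<in>UNIV. sdist P pol (\<lambda>x. if x = s then 1 else 0) t s' * (\<Sum>a\<in>UNIV. pol s' a * r s' a)))"

definition Vmu :: "('s::finite \<Rightarrow> 'a::finite \<Rightarrow> 's \<Rightarrow> real) \<Rightarrow> ('s \<Rightarrow> 'a \<Rightarrow> real) \<Rightarrow> real \<Rightarrow> ('s \<Rightarrow> 'a \<Rightarrow> real) \<Rightarrow> ('s \<Rightarrow> real) \<Rightarrow> real" where
  "Vmu P r gamma pol mu = (\<Sum>s\<in>UNIV. mu s * Vs P r gamma pol s)"

definition dvisit :: "('s::finite \<Rightarrow> 'a::finite \<Rightarrow> 's \<Rightarrow> real) \<Rightarrow> real \<Rightarrow> ('s \<Rightarrow> 'a \<Rightarrow> real) \<Rightarrow> ('s \<Rightarrow> real) \<Rightarrow> 's \<Rightarrow> real" where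
  "dvisit P gamma pol mu s = (1 - gamma) * (\<Sum>t. gamma ^ t * sdist P pol mu t s)"

definition C_inf :: "('s::finite \<Rightarrow> 'a::finite \<Rightarrow> 's \<Rightarrow> real) \<Rightarrow> real \<Rightarrow> ('s \<Rightarrow> real) \<Rightarrow> real" where
  "C_inf P gamma mu = Sup {dvisit P gamma pol mu s / mu s | (pol :: 's \<Rightarrow> 'a \<Rightarrow> real) s. is_policy pol}"

definition softmax :: "real ^ ('s::finite \<times> 'a::finite) \<Rightarrow> 's \<Rightarrow> 'a \<Rightarrow> real" where
  "softmax theta s a = exp (theta $ (s, a)) / (\<Sum>a'\<in>UNIV. exp (theta $ (s, a')))"

definition grad :: "(real ^ 'n::finite \<Rightarrow> real) \<Rightarrow> real ^ 'n \<Rightarrow> real ^ 'n" where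
  "grad f theta = (\<chi> i. deriv (\<lambda>t. f (theta + t *\<^sub>R axis i 1)) 0)"

end

(* The gradient of V(mu) at theta is G(theta)(s,a) = rho(s) pi(a|s) (Q(s,a) - V(s)), where
   rho = d_mu / (1 - gamma) is the unnormalised discounted visitation.  Along a unit-speed line
   theta + t v, differentiating the three factors of G and using the concentrability bound
   rho <= (C_inf / (1 - gamma)) mu gives |G'| <= (3 + 4c) |G| with c = C_inf / (1 - gamma) - 1.
   A Gronwall argument yields |G(theta + t v)| <= exp ((3 + 4c) t) |G(theta)|, and the step size
   is chosen so that (3 + 4c) eta = 1 / (2 sqrt S) <= 1/2, whence the growth factor is at most
   exp (1/2) <= 2. *)

theory Submission
  imports Defs
begin

lemma sdist_Suc_initial:
  "sdist P pol nu (Suc t) = sdist P pol (\<lambda>x. \<Sum>s\<in>UNIV. nu s * Ppi P pol s x) t"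
  by (induction t) auto

lemma sdist_linear:
  "sdist P pol nu t y = (\<Sum>s\<in>UNIV. nu s * sdist P pol (\<lambda>x. if x = s then 1 else 0) t y)"
proof (induction t arbitrary: y)
  case 0
  then show ?case by (simp add: if_distrib cong: if_cong)
next
  case (Suc t)
  have "sdist P pol nu (Suc t) y
      = (\<Sum>x\<in>UNIV. \<Sum>s\<in>UNIV. nu s * sdist P pol (\<lambda>x. if x = s then 1 else 0) t x * Ppi P pol x y)"
    using Suc by (simp add: sum_distrib_right)
  also have "\<dots> = (\<Sum>s\<in>UNIV. \<Sum>x\<in>UNIV. nu s * sdist P pol (\<lambda>x. if x = s then 1 else 0) t x * Ppi P pol x y)"
    by (rule sum.swap)
  finally show ?case by (simp add: sum_distrib_left mult.assoc)
qed

lemma sum_UNIV_prod: "(\<Sum>i\<in>UNIV. f i) = (\<Sum>s\<in>UNIV. \<Sum>a\<in>UNIV. f (s, a))"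
  by (simp add: UNIV_Times_UNIV[symmetric] sum.cartesian_product del: UNIV_Times_UNIV)

lemma norm_le_scaled_componentwise_cart:
  fixes x y :: "real ^ 'n::finite"
  assumes "\<And>i. \<bar>x $ i\<bar> \<le> k * \<bar>y $ i\<bar>" and "0 \<le> k"
  shows "norm x \<le> k * norm y"
proof -
  have "norm x \<le> norm (k *\<^sub>R y)"
    by (rule norm_le_componentwise_cart) (use assms in \<open>simp add: abs_mult\<close>)
  then show ?thesis using assms(2) by simp
qed

lemma sum_abs_mult_le_norm_mult_cart:
  fixes x y :: "real ^ 'n::finite"
  shows "(\<Sum>i\<in>UNIV. \<bar>x $ i\<bar> * \<bar>y $ i\<bar>) \<le> norm x * norm y"
proof -
  have "(\<Sum>i\<in>UNIV. \<bar>x $ i\<bar> * \<bar>y $ i\<bar>) \<le> L2_set (\<lambda>i. x $ i) UNIV * L2_set (\<lambda>i. y $ i) UNIV"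
    by (rule L2_set_mult_ineq)
  then show ?thesis by (simp add: norm_vec_def L2_set_def)
qed

lemma exp_growth_bound:
  fixes f :: "real \<Rightarrow> real"
  assumes deriv: "\<And>t. \<exists>D. DERIV f t :> D \<and> D \<le> k * f t" and "0 \<le> T"
  shows "f T \<le> exp (k * T) * f 0"
proof -
  define g where "g t = exp (- (k * t)) * f t" for t
  have "g T \<le> g 0"
  proof (rule DERIV_nonpos_imp_nonincreasing[OF \<open>0 \<le> T\<close>])
    fix t
    obtain D where D: "DERIV f t :> D" and "D \<le> k * f t" using deriv by blast
    have "DERIV g t :> exp (- (k * t)) * (D - k * f t)"
      unfolding g_def[abs_def] by (rule derivative_eq_intros D refl | simp add: algebra_simps)+
    moreover have "exp (- (k * t)) * (D - k * f t) \<le> 0"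
      using \<open>D \<le> k * f t\<close> by (intro mult_nonneg_nonpos) auto
    ultimately show "\<exists>y. DERIV g t :> y \<and> y \<le> 0" by blast
  qed
  then have "exp (k * T) * g T \<le> exp (k * T) * f 0" by (simp add: g_def)
  then show ?thesis by (simp add: g_def mult.assoc[symmetric] exp_add[symmetric])
qed

lemma softmax_pos: "0 < softmax th s a"
  unfolding softmax_def by (intro divide_pos_pos exp_gt_zero sum_pos) auto

lemma softmax_sum: "(\<Sum>a\<in>UNIV. softmax th s a) = 1"
proof -
  have "(\<Sum>a'\<in>UNIV. exp (th $ (s, a'))) > 0" by (intro sum_pos) auto
  then show ?thesis unfolding softmax_def by (simp flip: sum_divide_distrib)
qed

lemma is_policy_softmax: "is_policy (softmax th)"
  unfolding is_policy_def using softmax_pos softmax_sum less_imp_le by blast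

lemma softmax_line_deriv:
  fixes th u :: "real ^ ('s::finite \<times> 'a::finite)"
  shows "DERIV (\<lambda>t. softmax (th + t *\<^sub>R u) s a) t0 :>
    softmax (th + t0 *\<^sub>R u) s a * (u $ (s, a) - (\<Sum>b\<in>UNIV. softmax (th + t0 *\<^sub>R u) s b * u $ (s, b)))"
proof -
  define E where "E t b = exp (th $ (s, b) + t * u $ (s, b))" for t b
  define Z where "Z t = (\<Sum>b\<in>UNIV. E t b)" for t
  have softmax_eq: "softmax (th + t *\<^sub>R u) s b = E t b / Z t" for t b
    unfolding softmax_def E_def Z_def by simp
  have dE: "DERIV (\<lambda>t. E t b) t0 :> E t0 b * u $ (s, b)" for b
    unfolding E_def by (auto intro!: derivative_eq_intros)
  have dZ: "DERIV Z t0 :> (\<Sum>b\<in>UNIV. E t0 b * u $ (s, b))"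
    unfolding Z_def[abs_def] by (intro DERIV_sum dE)
  have "Z t0 > 0" unfolding Z_def E_def by (intro sum_pos) auto
  then have "DERIV (\<lambda>t. E t a / Z t) t0 :>
     (E t0 a * u $ (s, a) * Z t0 - E t0 a * (\<Sum>b\<in>UNIV. E t0 b * u $ (s, b))) / (Z t0 * Z t0)"
    by (intro DERIV_divide dE dZ) simp
  moreover have "(E t0 a * u $ (s, a) * Z t0 - E t0 a * (\<Sum>b\<in>UNIV. E t0 b * u $ (s, b))) / (Z t0 * Z t0)
     = E t0 a / Z t0 * (u $ (s, a) - (\<Sum>b\<in>UNIV. E t0 b / Z t0 * u $ (s, b)))"
    using \<open>Z t0 > 0\<close> by (simp add: field_simps sum_distrib_left flip: sum_divide_distrib)
  ultimately show ?thesis unfolding softmax_eq by simp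
qed

locale finite_mdp =
  fixes P :: "'s::finite \<Rightarrow> 'a::finite \<Rightarrow> 's \<Rightarrow> real" and r :: "'s \<Rightarrow> 'a \<Rightarrow> real" and gamma :: real
  assumes mdp: "is_MDP P r gamma"
begin

lemma P_nonneg: "0 \<le> P s a s'" and P_sum: "(\<Sum>s'\<in>UNIV. P s a s') = 1"
  and gamma_nonneg: "0 \<le> gamma" and gamma_less_1: "gamma < 1"
  using mdp by (auto simp: is_MDP_def)

lemma Ppi_nonneg: "is_policy pol \<Longrightarrow> 0 \<le> Ppi P pol s s'"
  unfolding Ppi_def is_policy_def by (auto intro!: sum_nonneg simp: P_nonneg)

lemma Ppi_sum: "is_policy pol \<Longrightarrow> (\<Sum>s'\<in>UNIV. Ppi P pol s s') = 1"
proof -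
  assume "is_policy pol"
  have "(\<Sum>s'\<in>UNIV. Ppi P pol s s') = (\<Sum>a\<in>UNIV. \<Sum>s'\<in>UNIV. pol s a * P s a s')"
    unfolding Ppi_def by (rule sum.swap)
  also have "\<dots> = 1" using \<open>is_policy pol\<close> by (simp add: P_sum is_policy_def flip: sum_distrib_left)
  finally show ?thesis .
qed

definition step_prob :: "('s \<Rightarrow> 'a \<Rightarrow> real) \<Rightarrow> nat \<Rightarrow> 's \<Rightarrow> 's \<Rightarrow> real" where
  "step_prob pol t s = sdist P pol (\<lambda>x. if x = s then 1 else 0) t"

lemma step_prob_0: "step_prob pol 0 s y = (if y = s then 1 else 0)"
  by (simp add: step_prob_def)

lemma step_prob_Suc_right: "step_prob pol (Suc t) s y = (\<Sum>x\<in>UNIV. step_prob pol t s x * Ppi P pol x y)"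
  by (simp add: step_prob_def)

lemma step_prob_Suc_left: "step_prob pol (Suc t) s y = (\<Sum>x\<in>UNIV. Ppi P pol s x * step_prob pol t x y)"
  unfolding step_prob_def sdist_Suc_initial by (subst sdist_linear) (simp add: of_bool_def[symmetric])

lemma step_prob_nonneg: "is_policy pol \<Longrightarrow> 0 \<le> step_prob pol t s y"
  by (induction t arbitrary: y) (simp_all add: step_prob_0 step_prob_Suc_right sum_nonneg Ppi_nonneg)

lemma step_prob_sum: "is_policy pol \<Longrightarrow> (\<Sum>y\<in>UNIV. step_prob pol t s y) = 1"
proof (induction t)
  case (Suc t)
  have "(\<Sum>y\<in>UNIV. step_prob pol (Suc t) s y) = (\<Sum>x\<in>UNIV. \<Sum>y\<in>UNIV. step_prob pol t s x * Ppi P pol x y)"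
    unfolding step_prob_Suc_right by (rule sum.swap)
  then show ?case using Suc by (simp add: Ppi_sum flip: sum_distrib_left)
qed (simp add: step_prob_0)

lemma step_prob_le_1: "is_policy pol \<Longrightarrow> step_prob pol t s y \<le> 1"
  using member_le_sum[of y UNIV "step_prob pol t s"] by (simp add: step_prob_nonneg step_prob_sum)

lemma summable_step_prob: "is_policy pol \<Longrightarrow> summable (\<lambda>t. gamma ^ t * step_prob pol t s y)"
  by (rule summable_comparison_test[where g = "\<lambda>t. gamma ^ t"])
    (use gamma_nonneg gamma_less_1 step_prob_nonneg step_prob_le_1
      in \<open>auto intro!: mult_left_le simp: summable_geometric\<close>)

(* The matrix (I - gamma P_pol)^-1, written as its Neumann series. *)
definition occupancy :: "('s \<Rightarrow> 'a \<Rightarrow> real) \<Rightarrow> 's \<Rightarrow> 's \<Rightarrow> real" where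
  "occupancy pol s y = (\<Sum>t. gamma ^ t * step_prob pol t s y)"

lemma occupancy_nonneg: "is_policy pol \<Longrightarrow> 0 \<le> occupancy pol s y"
  unfolding occupancy_def
  by (intro suminf_nonneg summable_step_prob) (auto simp: step_prob_nonneg gamma_nonneg)

lemma occupancy_row_sum: "is_policy pol \<Longrightarrow> (\<Sum>y\<in>UNIV. occupancy pol s y) = 1 / (1 - gamma)"
proof -
  assume p: "is_policy pol"
  have "(\<Sum>y\<in>UNIV. occupancy pol s y) = (\<Sum>t. \<Sum>y\<in>UNIV. gamma ^ t * step_prob pol t s y)"
    unfolding occupancy_def by (rule suminf_sum[symmetric]) (rule summable_step_prob[OF p])
  also have "\<dots> = (\<Sum>t. gamma ^ t)" by (simp add: step_prob_sum[OF p] flip: sum_distrib_left)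
  also have "\<dots> = 1 / (1 - gamma)" using gamma_nonneg gamma_less_1 by (simp add: suminf_geometric)
  finally show ?thesis .
qed

lemma occupancy_le: "is_policy pol \<Longrightarrow> occupancy pol s y \<le> 1 / (1 - gamma)"
  using member_le_sum[of y UNIV "occupancy pol s"] by (simp add: occupancy_nonneg occupancy_row_sum)

lemma occupancy_split_head:
  assumes p: "is_policy pol"
  shows "occupancy pol s y = (if y = s then 1 else 0) + (\<Sum>t. gamma ^ Suc t * step_prob pol (Suc t) s y)"
  unfolding occupancy_def using suminf_split_head[OF summable_step_prob[OF p]] by (simp add: step_prob_0)

lemma occupancy_unfold_left:
  assumes p: "is_policy pol"
  shows "occupancy pol s y = (if y = s then 1 else 0) + gamma * (\<Sum>x\<in>UNIV. Ppi P pol s x * occupancy pol x y)"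
proof -
  have S: "summable (\<lambda>t. Ppi P pol s x * (gamma ^ t * step_prob pol t x y))" for x
    by (rule summable_mult[OF summable_step_prob[OF p]])
  have "(\<Sum>t. gamma ^ Suc t * step_prob pol (Suc t) s y)
      = (\<Sum>t. gamma * (\<Sum>x\<in>UNIV. Ppi P pol s x * (gamma ^ t * step_prob pol t x y)))"
    by (simp add: step_prob_Suc_left sum_distrib_left mult_ac)
  also have "\<dots> = gamma * (\<Sum>x\<in>UNIV. \<Sum>t. Ppi P pol s x * (gamma ^ t * step_prob pol t x y))"
    by (simp only: suminf_mult[OF summable_sum[OF S]] suminf_sum[OF S])
  also have "\<dots> = gamma * (\<Sum>x\<in>UNIV. Ppi P pol s x * occupancy pol x y)"
    unfolding occupancy_def by (simp add: suminf_mult summable_step_prob[OF p])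
  finally show ?thesis using occupancy_split_head[OF p] by simp
qed

lemma occupancy_unfold_right:
  assumes p: "is_policy pol"
  shows "occupancy pol s y = (if y = s then 1 else 0) + gamma * (\<Sum>x\<in>UNIV. occupancy pol s x * Ppi P pol x y)"
proof -
  have S: "summable (\<lambda>t. gamma ^ t * step_prob pol t s x * Ppi P pol x y)" for x
    by (rule summable_mult2[OF summable_step_prob[OF p]])
  have "(\<Sum>t. gamma ^ Suc t * step_prob pol (Suc t) s y)
      = (\<Sum>t. gamma * (\<Sum>x\<in>UNIV. gamma ^ t * step_prob pol t s x * Ppi P pol x y))"
    by (simp add: step_prob_Suc_right sum_distrib_left mult_ac)
  also have "\<dots> = gamma * (\<Sum>x\<in>UNIV. \<Sum>t. gamma ^ t * step_prob pol t s x * Ppi P pol x y)"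
    by (simp only: suminf_mult[OF summable_sum[OF S]] suminf_sum[OF S])
  also have "\<dots> = gamma * (\<Sum>x\<in>UNIV. occupancy pol s x * Ppi P pol x y)"
    unfolding occupancy_def by (simp add: suminf_mult2 summable_step_prob[OF p])
  finally show ?thesis using occupancy_split_head[OF p] by simp
qed

lemma occupancy_diff:
  assumes p: "is_policy p" and q: "is_policy q"
  shows "occupancy q s y - occupancy p s y
    = gamma * (\<Sum>x\<in>UNIV. \<Sum>z\<in>UNIV. occupancy q s x * (Ppi P q x z - Ppi P p x z) * occupancy p z y)"
proof -
  let ?M = "\<Sum>x\<in>UNIV. occupancy q s x * occupancy p x y"
  have "?M = (\<Sum>x\<in>UNIV. occupancy q s x * ((if y = x then 1 else 0)
      + gamma * (\<Sum>z\<in>UNIV. Ppi P p x z * occupancy p z y)))"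
    by (intro sum.cong refl) (subst occupancy_unfold_left[OF p], simp)
  then have left: "?M = occupancy q s y
      + gamma * (\<Sum>x\<in>UNIV. \<Sum>z\<in>UNIV. occupancy q s x * Ppi P p x z * occupancy p z y)"
    by (simp add: distrib_left sum.distrib sum_distrib_left mult_ac of_bool_def[symmetric])
  have "?M = (\<Sum>z\<in>UNIV. ((if z = s then 1 else 0)
      + gamma * (\<Sum>x\<in>UNIV. occupancy q s x * Ppi P q x z)) * occupancy p z y)"
    by (intro sum.cong refl) (subst occupancy_unfold_right[OF q], simp)
  also have "\<dots> = occupancy p s y
      + gamma * (\<Sum>z\<in>UNIV. \<Sum>x\<in>UNIV. occupancy q s x * Ppi P q x z * occupancy p z y)"
    by (simp add: distrib_left distrib_right sum.distrib sum_distrib_left sum_distrib_right mult_ac of_bool_def[symmetric])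
  also have "(\<Sum>z\<in>UNIV. \<Sum>x\<in>UNIV. occupancy q s x * Ppi P q x z * occupancy p z y)
      = (\<Sum>x\<in>UNIV. \<Sum>z\<in>UNIV. occupancy q s x * Ppi P q x z * occupancy p z y)"
    by (rule sum.swap)
  finally have right: "?M = occupancy p s y
      + gamma * (\<Sum>x\<in>UNIV. \<Sum>z\<in>UNIV. occupancy q s x * Ppi P q x z * occupancy p z y)" .
  show ?thesis using left right
    by (simp add: right_diff_distrib left_diff_distrib sum_subtractf)
qed

definition exp_reward :: "('s \<Rightarrow> 'a \<Rightarrow> real) \<Rightarrow> 's \<Rightarrow> real" where
  "exp_reward pol s = (\<Sum>a\<in>UNIV. pol s a * r s a)"

definition state_value :: "('s \<Rightarrow> 'a \<Rightarrow> real) \<Rightarrow> 's \<Rightarrow> real" where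
  "state_value pol s = (\<Sum>y\<in>UNIV. occupancy pol s y * exp_reward pol y)"

definition qvalue :: "('s \<Rightarrow> 'a \<Rightarrow> real) \<Rightarrow> 's \<Rightarrow> 'a \<Rightarrow> real" where
  "qvalue pol s a = r s a + gamma * (\<Sum>z\<in>UNIV. P s a z * state_value pol z)"

definition visitation :: "('s \<Rightarrow> 'a \<Rightarrow> real) \<Rightarrow> ('s \<Rightarrow> real) \<Rightarrow> 's \<Rightarrow> real" where
  "visitation pol nu y = (\<Sum>s\<in>UNIV. nu s * occupancy pol s y)"

lemma Vs_eq_state_value: "is_policy pol \<Longrightarrow> Vs P r gamma pol s = state_value pol s"
proof -
  assume p: "is_policy pol"
  have "Vs P r gamma pol s = (\<Sum>t. \<Sum>y\<in>UNIV. gamma ^ t * step_prob pol t s y * exp_reward pol y)"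
    unfolding Vs_def step_prob_def exp_reward_def by (simp add: sum_distrib_left mult.assoc)
  also have "\<dots> = state_value pol s"
    unfolding state_value_def occupancy_def
    by (simp only: suminf_sum[OF summable_mult2[OF summable_step_prob[OF p]]]
        suminf_mult2[OF summable_step_prob[OF p], symmetric])
  finally show ?thesis .
qed

lemma dvisit_eq_visitation:
  "is_policy pol \<Longrightarrow> dvisit P gamma pol nu y = (1 - gamma) * visitation pol nu y"
proof -
  assume p: "is_policy pol"
  have "(\<Sum>t. gamma ^ t * sdist P pol nu t y) = (\<Sum>t. \<Sum>s\<in>UNIV. nu s * (gamma ^ t * step_prob pol t s y))"
    by (subst sdist_linear) (simp add: step_prob_def sum_distrib_left mult_ac)
  also have "\<dots> = visitation pol nu y"
    unfolding visitation_def occupancy_def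
    by (simp only: suminf_sum[OF summable_mult[OF summable_step_prob[OF p]]]
        suminf_mult[OF summable_step_prob[OF p]])
  finally show ?thesis unfolding dvisit_def by simp
qed

lemma visitation_unfold:
  assumes p: "is_policy pol"
  shows "visitation pol nu y = nu y + gamma * (\<Sum>x\<in>UNIV. visitation pol nu x * Ppi P pol x y)"
proof -
  have "visitation pol nu y = (\<Sum>s\<in>UNIV. nu s * ((if y = s then 1 else 0)
      + gamma * (\<Sum>x\<in>UNIV. occupancy pol s x * Ppi P pol x y)))"
    unfolding visitation_def by (intro sum.cong refl) (subst occupancy_unfold_right[OF p], simp)
  also have "\<dots> = nu y + gamma * (\<Sum>s\<in>UNIV. \<Sum>x\<in>UNIV. nu s * occupancy pol s x * Ppi P pol x y)"
    by (simp add: distrib_left sum.distrib sum_distrib_left mult_ac of_bool_def[symmetric])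
  also have "(\<Sum>s\<in>UNIV. \<Sum>x\<in>UNIV. nu s * occupancy pol s x * Ppi P pol x y)
      = (\<Sum>x\<in>UNIV. \<Sum>s\<in>UNIV. nu s * occupancy pol s x * Ppi P pol x y)"
    by (rule sum.swap)
  finally show ?thesis by (simp add: visitation_def sum_distrib_right)
qed

lemma visitation_transition_sum:
  assumes p: "is_policy pol"
  shows "gamma * (\<Sum>x\<in>UNIV. visitation pol nu x * (\<Sum>z\<in>UNIV. Ppi P pol x z * f z))
    = (\<Sum>z\<in>UNIV. (visitation pol nu z - nu z) * f z)"
proof -
  have "(\<Sum>x\<in>UNIV. visitation pol nu x * (\<Sum>z\<in>UNIV. Ppi P pol x z * f z))
      = (\<Sum>x\<in>UNIV. \<Sum>z\<in>UNIV. visitation pol nu x * Ppi P pol x z * f z)"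
    by (simp add: sum_distrib_left mult.assoc)
  also have "\<dots> = (\<Sum>z\<in>UNIV. (\<Sum>x\<in>UNIV. visitation pol nu x * Ppi P pol x z) * f z)"
    by (subst sum.swap) (simp add: sum_distrib_right)
  finally have "(\<Sum>x\<in>UNIV. visitation pol nu x * (\<Sum>z\<in>UNIV. Ppi P pol x z * f z))
      = (\<Sum>z\<in>UNIV. (\<Sum>x\<in>UNIV. visitation pol nu x * Ppi P pol x z) * f z)" .
  moreover have "gamma * (\<Sum>x\<in>UNIV. visitation pol nu x * Ppi P pol x z) = visitation pol nu z - nu z" for z
    using visitation_unfold[OF p, of nu z] by simp
  ultimately show ?thesis by (simp add: sum_distrib_left mult.assoc[symmetric])
qed

lemma visitation_ge:
  assumes p: "is_policy pol" and nu: "\<And>s. 0 \<le> nu s"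
  shows "nu y \<le> visitation pol nu y"
proof -
  have "0 \<le> visitation pol nu x" for x
    unfolding visitation_def by (intro sum_nonneg mult_nonneg_nonneg nu occupancy_nonneg p)
  then have "0 \<le> gamma * (\<Sum>x\<in>UNIV. visitation pol nu x * Ppi P pol x y)"
    by (intro mult_nonneg_nonneg sum_nonneg gamma_nonneg Ppi_nonneg p)
  then show ?thesis using visitation_unfold[OF p, of nu y] by linarith
qed

lemma state_value_unfold:
  assumes p: "is_policy pol"
  shows "state_value pol s = exp_reward pol s + gamma * (\<Sum>x\<in>UNIV. Ppi P pol s x * state_value pol x)"
proof -
  have "state_value pol s = (\<Sum>y\<in>UNIV. ((if y = s then 1 else 0)
      + gamma * (\<Sum>x\<in>UNIV. Ppi P pol s x * occupancy pol x y)) * exp_reward pol y)"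
    unfolding state_value_def by (intro sum.cong refl) (subst occupancy_unfold_left[OF p], simp)
  also have "\<dots> = exp_reward pol s
      + gamma * (\<Sum>y\<in>UNIV. \<Sum>x\<in>UNIV. Ppi P pol s x * occupancy pol x y * exp_reward pol y)"
    by (simp add: distrib_left distrib_right sum.distrib sum_distrib_left sum_distrib_right mult_ac of_bool_def[symmetric])
  also have "(\<Sum>y\<in>UNIV. \<Sum>x\<in>UNIV. Ppi P pol s x * occupancy pol x y * exp_reward pol y)
      = (\<Sum>x\<in>UNIV. \<Sum>y\<in>UNIV. Ppi P pol s x * occupancy pol x y * exp_reward pol y)"
    by (rule sum.swap)
  finally show ?thesis by (simp add: state_value_def sum_distrib_left mult.assoc)
qed

lemma state_value_eq_sum_qvalue:
  assumes p: "is_policy pol"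
  shows "state_value pol s = (\<Sum>a\<in>UNIV. pol s a * qvalue pol s a)"
proof -
  have "(\<Sum>a\<in>UNIV. pol s a * qvalue pol s a)
      = exp_reward pol s + gamma * (\<Sum>a\<in>UNIV. \<Sum>z\<in>UNIV. pol s a * P s a z * state_value pol z)"
    unfolding qvalue_def exp_reward_def
    by (simp add: distrib_left sum.distrib sum_distrib_left mult_ac)
  also have "(\<Sum>a\<in>UNIV. \<Sum>z\<in>UNIV. pol s a * P s a z * state_value pol z)
      = (\<Sum>z\<in>UNIV. \<Sum>a\<in>UNIV. pol s a * P s a z * state_value pol z)"
    by (rule sum.swap)
  finally have "(\<Sum>a\<in>UNIV. pol s a * qvalue pol s a)
      = exp_reward pol s + gamma * (\<Sum>z\<in>UNIV. \<Sum>a\<in>UNIV. pol s a * P s a z * state_value pol z)" .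
  then show ?thesis
    using state_value_unfold[OF p, of s] by (simp add: Ppi_def sum_distrib_right)
qed

lemma abs_occupancy_diff_le:
  assumes p: "is_policy p" and q: "is_policy q"
  shows "\<bar>occupancy q s y - occupancy p s y\<bar>
    \<le> gamma / (1 - gamma)\<^sup>2 * (\<Sum>x\<in>UNIV. \<Sum>z\<in>UNIV. \<bar>Ppi P q x z - Ppi P p x z\<bar>)"
proof -
  have occ_bound: "\<bar>occupancy pol x z\<bar> \<le> 1 / (1 - gamma)" if "is_policy pol" for pol x z
    using occupancy_nonneg[OF that] occupancy_le[OF that] by simp
  have "\<bar>occupancy q s y - occupancy p s y\<bar>
      \<le> gamma * (\<Sum>x\<in>UNIV. \<Sum>z\<in>UNIV. \<bar>occupancy q s x * (Ppi P q x z - Ppi P p x z) * occupancy p z y\<bar>)"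
    unfolding occupancy_diff[OF p q] abs_mult[of gamma] abs_of_nonneg[OF gamma_nonneg]
    by (intro mult_left_mono gamma_nonneg order.trans[OF sum_abs] sum_mono sum_abs)
  also have "\<dots> \<le> gamma * (\<Sum>x\<in>UNIV. \<Sum>z\<in>UNIV. 1 / (1 - gamma) * \<bar>Ppi P q x z - Ppi P p x z\<bar> * (1 / (1 - gamma)))"
    unfolding abs_mult using gamma_nonneg gamma_less_1
    by (intro mult_left_mono sum_mono mult_mono occ_bound p q) auto
  also have "\<dots> = gamma / (1 - gamma)\<^sup>2 * (\<Sum>x\<in>UNIV. \<Sum>z\<in>UNIV. \<bar>Ppi P q x z - Ppi P p x z\<bar>)"
    by (simp add: sum_distrib_left power2_eq_square)
  finally show ?thesis .
qed

end

locale policy_path = finite_mdp P r gamma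
  for P :: "'s::finite \<Rightarrow> 'a::finite \<Rightarrow> 's \<Rightarrow> real" and r gamma +
  fixes pol :: "real \<Rightarrow> 's \<Rightarrow> 'a \<Rightarrow> real" and t0 :: real and dpol :: "'s \<Rightarrow> 'a \<Rightarrow> real"
  assumes is_policy_path: "\<And>t. is_policy (pol t)"
    and deriv_pol: "\<And>s a. DERIV (\<lambda>t. pol t s a) t0 :> dpol s a"
begin

definition dPpi :: "'s \<Rightarrow> 's \<Rightarrow> real" where
  "dPpi x z = (\<Sum>a\<in>UNIV. dpol x a * P x a z)"

definition dreward :: "'s \<Rightarrow> real" where
  "dreward x = (\<Sum>a\<in>UNIV. dpol x a * r x a)"

definition dpol_qvalue :: "'s \<Rightarrow> real" where
  "dpol_qvalue x = (\<Sum>a\<in>UNIV. dpol x a * qvalue (pol t0) x a)"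

lemma Ppi_deriv: "DERIV (\<lambda>t. Ppi P (pol t) x z) t0 :> dPpi x z"
  unfolding Ppi_def dPpi_def by (intro DERIV_sum DERIV_cmult_right deriv_pol)

lemma exp_reward_deriv: "DERIV (\<lambda>t. exp_reward (pol t) x) t0 :> dreward x"
  unfolding exp_reward_def dreward_def by (intro DERIV_sum DERIV_cmult_right deriv_pol)

lemma occupancy_tendsto: "((\<lambda>t. occupancy (pol t) s y) \<longlongrightarrow> occupancy (pol t0) s y) (at t0)"
proof -
  define bound where "bound = (\<lambda>t. gamma / (1 - gamma)\<^sup>2
    * (\<Sum>x\<in>UNIV. \<Sum>z\<in>UNIV. \<bar>Ppi P (pol t) x z - Ppi P (pol t0) x z\<bar>))"
  have "((\<lambda>t. Ppi P (pol t) x z) \<longlongrightarrow> Ppi P (pol t0) x z) (at t0)" for x z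
    using DERIV_isCont[OF Ppi_deriv] by (simp add: isCont_def)
  then have "(bound \<longlongrightarrow> gamma / (1 - gamma)\<^sup>2
      * (\<Sum>x\<in>UNIV. \<Sum>z\<in>UNIV. \<bar>Ppi P (pol t0) x z - Ppi P (pol t0) x z\<bar>)) (at t0)"
    unfolding bound_def by (intro tendsto_mult_left tendsto_sum tendsto_rabs tendsto_diff tendsto_const)
  then have bound_lim: "(bound \<longlongrightarrow> 0) (at t0)" by simp
  have "norm (occupancy (pol t) s y - occupancy (pol t0) s y) \<le> bound t" for t
    unfolding bound_def real_norm_def by (rule abs_occupancy_diff_le[OF is_policy_path is_policy_path])
  then have "((\<lambda>t. occupancy (pol t) s y - occupancy (pol t0) s y) \<longlongrightarrow> 0) (at t0)"
    by (intro Lim_null_comparison[OF always_eventually bound_lim]) blast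
  then show ?thesis by (rule LIM_zero_cancel)
qed

(* d/dt (I - gamma P_t)^-1 = gamma M P' M, read off from the resolvent identity occupancy_diff. *)
lemma occupancy_deriv: "DERIV (\<lambda>t. occupancy (pol t) s y) t0 :>
   gamma * (\<Sum>x\<in>UNIV. \<Sum>z\<in>UNIV. occupancy (pol t0) s x * dPpi x z * occupancy (pol t0) z y)"
proof -
  have quotient: "(\<lambda>h. (occupancy (pol (t0 + h)) s y - occupancy (pol t0) s y) / h) =
     (\<lambda>h. gamma * (\<Sum>x\<in>UNIV. \<Sum>z\<in>UNIV. occupancy (pol (t0 + h)) s x
        * ((Ppi P (pol (t0 + h)) x z - Ppi P (pol t0) x z) / h) * occupancy (pol t0) z y))"
    by (rule ext, subst occupancy_diff[OF is_policy_path is_policy_path])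
      (simp add: divide_inverse sum_distrib_right sum_distrib_left mult_ac)
  have "((\<lambda>h. occupancy (pol (t0 + h)) s x) \<longlongrightarrow> occupancy (pol t0) s x) (at 0)" for x
    by (rule LIM_offset_zero[OF occupancy_tendsto])
  moreover have "((\<lambda>h. (Ppi P (pol (t0 + h)) x z - Ppi P (pol t0) x z) / h) \<longlongrightarrow> dPpi x z) (at 0)" for x z
    using Ppi_deriv[of x z] by (simp add: DERIV_def)
  ultimately show ?thesis unfolding DERIV_def quotient by (intro tendsto_intros)
qed

lemma dpol_qvalue_eq: "dpol_qvalue x = dreward x + gamma * (\<Sum>z\<in>UNIV. dPpi x z * state_value (pol t0) z)"
proof -
  have "dpol_qvalue x = dreward x + gamma * (\<Sum>a\<in>UNIV. \<Sum>z\<in>UNIV. dpol x a * P x a z * state_value (pol t0) z)"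
    unfolding dpol_qvalue_def qvalue_def dreward_def
    by (simp add: distrib_left sum.distrib sum_distrib_left mult_ac)
  also have "(\<Sum>a\<in>UNIV. \<Sum>z\<in>UNIV. dpol x a * P x a z * state_value (pol t0) z)
      = (\<Sum>z\<in>UNIV. \<Sum>a\<in>UNIV. dpol x a * P x a z * state_value (pol t0) z)"
    by (rule sum.swap)
  finally show ?thesis by (simp add: dPpi_def sum_distrib_right)
qed

lemma state_value_deriv:
  "DERIV (\<lambda>t. state_value (pol t) s) t0 :> (\<Sum>x\<in>UNIV. occupancy (pol t0) s x * dpol_qvalue x)"
proof -
  let ?M = "occupancy (pol t0)"
  have "DERIV (\<lambda>t. state_value (pol t) s) t0 :>
     (\<Sum>y\<in>UNIV. gamma * (\<Sum>x\<in>UNIV. \<Sum>z\<in>UNIV. ?M s x * dPpi x z * ?M z y) * exp_reward (pol t0) y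
        + dreward y * ?M s y)"
    unfolding state_value_def by (intro DERIV_sum DERIV_mult occupancy_deriv exp_reward_deriv)
  also have "(\<Sum>y\<in>UNIV. gamma * (\<Sum>x\<in>UNIV. \<Sum>z\<in>UNIV. ?M s x * dPpi x z * ?M z y) * exp_reward (pol t0) y
        + dreward y * ?M s y)
      = gamma * (\<Sum>x\<in>UNIV. \<Sum>y\<in>UNIV. \<Sum>z\<in>UNIV. ?M s x * dPpi x z * (?M z y * exp_reward (pol t0) y))
        + (\<Sum>x\<in>UNIV. ?M s x * dreward x)"
    by (subst sum.swap) (simp add: sum.distrib sum_distrib_left sum_distrib_right mult_ac)
  also have "(\<Sum>x\<in>UNIV. \<Sum>y\<in>UNIV. \<Sum>z\<in>UNIV. ?M s x * dPpi x z * (?M z y * exp_reward (pol t0) y))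
      = (\<Sum>x\<in>UNIV. ?M s x * (\<Sum>z\<in>UNIV. dPpi x z * state_value (pol t0) z))"
    unfolding state_value_def sum_distrib_left mult.assoc by (intro sum.cong refl sum.swap)
  also have "gamma * (\<Sum>x\<in>UNIV. ?M s x * (\<Sum>z\<in>UNIV. dPpi x z * state_value (pol t0) z))
      + (\<Sum>x\<in>UNIV. ?M s x * dreward x) = (\<Sum>x\<in>UNIV. ?M s x * dpol_qvalue x)"
    by (simp add: dpol_qvalue_eq distrib_left sum.distrib sum_distrib_left mult_ac)
  finally show ?thesis .
qed

lemma visitation_deriv: "DERIV (\<lambda>t. visitation (pol t) nu y) t0 :>
   gamma * (\<Sum>x\<in>UNIV. \<Sum>z\<in>UNIV. visitation (pol t0) nu x * dPpi x z * occupancy (pol t0) z y)"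
proof -
  let ?M = "occupancy (pol t0)"
  have "DERIV (\<lambda>t. visitation (pol t) nu y) t0 :>
     (\<Sum>s\<in>UNIV. nu s * (gamma * (\<Sum>x\<in>UNIV. \<Sum>z\<in>UNIV. ?M s x * dPpi x z * ?M z y)))"
    unfolding visitation_def by (intro DERIV_sum DERIV_cmult occupancy_deriv)
  also have "(\<Sum>s\<in>UNIV. nu s * (gamma * (\<Sum>x\<in>UNIV. \<Sum>z\<in>UNIV. ?M s x * dPpi x z * ?M z y)))
      = gamma * (\<Sum>s\<in>UNIV. \<Sum>x\<in>UNIV. \<Sum>z\<in>UNIV. nu s * ?M s x * dPpi x z * ?M z y)"
    by (simp add: sum_distrib_left mult_ac)
  also have "(\<Sum>s\<in>UNIV. \<Sum>x\<in>UNIV. \<Sum>z\<in>UNIV. nu s * ?M s x * dPpi x z * ?M z y)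
      = (\<Sum>x\<in>UNIV. \<Sum>s\<in>UNIV. \<Sum>z\<in>UNIV. nu s * ?M s x * dPpi x z * ?M z y)"
    by (rule sum.swap)
  also have "\<dots> = (\<Sum>x\<in>UNIV. \<Sum>z\<in>UNIV. visitation (pol t0) nu x * dPpi x z * ?M z y)"
    unfolding visitation_def sum_distrib_right by (intro sum.cong refl sum.swap)
  finally show ?thesis .
qed

lemma qvalue_deriv: "DERIV (\<lambda>t. qvalue (pol t) x a) t0 :>
   gamma * (\<Sum>z\<in>UNIV. P x a z * (\<Sum>y\<in>UNIV. occupancy (pol t0) z y * dpol_qvalue y))"
  unfolding qvalue_def
  by (rule DERIV_cong[OF DERIV_add[OF DERIV_const DERIV_cmult[OF DERIV_sum[OF DERIV_cmult[OF state_value_deriv]]]]])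
    simp

end

locale mdp_start_dist = finite_mdp P r gamma
  for P :: "'s::finite \<Rightarrow> 'a::finite \<Rightarrow> 's \<Rightarrow> real" and r gamma +
  fixes mu :: "'s \<Rightarrow> real"
  assumes mu_pos: "\<And>s. 0 < mu s" and mu_sum: "(\<Sum>s\<in>UNIV. mu s) = 1"
begin

abbreviation rho :: "('s \<Rightarrow> 'a \<Rightarrow> real) \<Rightarrow> 's \<Rightarrow> real" where
  "rho pol \<equiv> visitation pol mu"

lemma rho_ge_mu: "is_policy pol \<Longrightarrow> mu y \<le> rho pol y"
  using visitation_ge mu_pos less_imp_le by blast

lemma rho_pos: "is_policy pol \<Longrightarrow> 0 < rho pol y"
  using rho_ge_mu mu_pos less_le_trans by blast

lemma dvisit_le_1: "is_policy pol \<Longrightarrow> dvisit P gamma pol mu s \<le> 1"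
proof -
  assume p: "is_policy pol"
  have "rho pol s \<le> (\<Sum>s0\<in>UNIV. mu s0 * (1 / (1 - gamma)))"
    unfolding visitation_def using mu_pos occupancy_le[OF p]
    by (intro sum_mono mult_left_mono) (auto simp: less_imp_le)
  also have "\<dots> = 1 / (1 - gamma)" by (simp add: mu_sum flip: sum_divide_distrib)
  finally have "(1 - gamma) * rho pol s \<le> 1" using gamma_less_1 by (simp add: field_simps)
  then show ?thesis by (simp add: dvisit_eq_visitation[OF p])
qed

lemma bdd_above_C_inf_set:
  "bdd_above {dvisit P gamma pol mu s / mu s | (pol :: 's \<Rightarrow> 'a \<Rightarrow> real) s. is_policy pol}"
proof (rule bdd_aboveI)
  fix x assume "x \<in> {dvisit P gamma pol mu s / mu s | (pol :: 's \<Rightarrow> 'a \<Rightarrow> real) s. is_policy pol}"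
  then obtain pol s where x: "x = dvisit P gamma pol mu s / mu s" and p: "is_policy (pol :: 's \<Rightarrow> 'a \<Rightarrow> real)"
    by blast
  have "x \<le> 1 / mu s"
    unfolding x using dvisit_le_1[OF p] mu_pos[of s] by (intro divide_right_mono) auto
  also have "\<dots> \<le> (\<Sum>s'\<in>UNIV. 1 / mu s')"
    by (rule member_le_sum) (use mu_pos in \<open>auto simp: less_imp_le\<close>)
  finally show "x \<le> (\<Sum>s'\<in>UNIV. 1 / mu s')" .
qed

lemma rho_le_C_inf:
  assumes p: "is_policy (pol :: 's \<Rightarrow> 'a \<Rightarrow> real)"
  shows "(1 - gamma) * rho pol s \<le> C_inf P gamma mu * mu s"
proof -
  have "dvisit P gamma pol mu s / mu s \<le> C_inf P gamma mu"
    unfolding C_inf_def by (rule cSup_upper[OF _ bdd_above_C_inf_set]) (use p in blast)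
  then show ?thesis using dvisit_eq_visitation[OF p] mu_pos[of s] by (simp add: pos_divide_le_eq)
qed

lemma C_inf_ge: "1 - gamma \<le> C_inf P gamma mu"
proof -
  obtain s :: 's where True by blast
  have p: "is_policy (softmax (0 :: real ^ ('s \<times> 'a)))" by (rule is_policy_softmax)
  have "(1 - gamma) * mu s \<le> (1 - gamma) * rho (softmax (0 :: real ^ ('s \<times> 'a))) s"
    using rho_ge_mu[OF p] gamma_less_1 by (intro mult_left_mono) auto
  also have "\<dots> \<le> C_inf P gamma mu * mu s" by (rule rho_le_C_inf[OF p])
  finally show ?thesis using mu_pos[of s] by simp
qed

definition policy_grad :: "real ^ ('s \<times> 'a) \<Rightarrow> real ^ ('s \<times> 'a)" where
  "policy_grad th = (\<chi> i. case i of (s, a) \<Rightarrow>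
     rho (softmax th) s * softmax th s a * (qvalue (softmax th) s a - state_value (softmax th) s))"

lemma policy_grad_nth: "policy_grad th $ (s, a)
  = rho (softmax th) s * softmax th s a * (qvalue (softmax th) s a - state_value (softmax th) s)"
  by (simp add: policy_grad_def)

end

locale softmax_line = mdp_start_dist P r gamma mu
  for P :: "'s::finite \<Rightarrow> 'a::finite \<Rightarrow> 's \<Rightarrow> real" and r gamma mu +
  fixes th0 u :: "real ^ ('s \<times> 'a)" and t0 :: real
begin

abbreviation th_t0 :: "real ^ ('s \<times> 'a)" where "th_t0 \<equiv> th0 + t0 *\<^sub>R u"
abbreviation pi_t0 :: "'s \<Rightarrow> 'a \<Rightarrow> real" where "pi_t0 \<equiv> softmax th_t0"

definition ubar :: "'s \<Rightarrow> real" where "ubar s = (\<Sum>b\<in>UNIV. pi_t0 s b * u $ (s, b))"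
definition dpi :: "'s \<Rightarrow> 'a \<Rightarrow> real" where "dpi s a = pi_t0 s a * (u $ (s, a) - ubar s)"

sublocale path: policy_path P r gamma "\<lambda>t. softmax (th0 + t *\<^sub>R u)" t0 dpi
  by unfold_locales (auto simp: is_policy_softmax dpi_def ubar_def intro: softmax_line_deriv)

lemma dpol_qvalue_softmax:
  "path.dpol_qvalue x = (\<Sum>a\<in>UNIV. u $ (x, a) * pi_t0 x a * (qvalue pi_t0 x a - state_value pi_t0 x))"
proof -
  have "path.dpol_qvalue x = (\<Sum>a\<in>UNIV. u $ (x, a) * pi_t0 x a * qvalue pi_t0 x a)
      - ubar x * (\<Sum>a\<in>UNIV. pi_t0 x a * qvalue pi_t0 x a)"
    unfolding path.dpol_qvalue_def dpi_def
    by (simp add: right_diff_distrib left_diff_distrib sum_subtractf sum_distrib_left mult_ac)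
  also have "(\<Sum>a\<in>UNIV. pi_t0 x a * qvalue pi_t0 x a) = state_value pi_t0 x"
    by (rule state_value_eq_sum_qvalue[symmetric, OF is_policy_softmax])
  finally show ?thesis
    unfolding ubar_def by (simp add: right_diff_distrib sum_subtractf sum_distrib_right sum_distrib_left mult_ac)
qed

lemma rho_mult_dpol_qvalue: "rho pi_t0 x * path.dpol_qvalue x = (\<Sum>a\<in>UNIV. u $ (x, a) * policy_grad th_t0 $ (x, a))"
  unfolding dpol_qvalue_softmax policy_grad_nth by (simp add: sum_distrib_left mult_ac)

lemma value_line_deriv:
  "DERIV (\<lambda>t. Vmu P r gamma (softmax (th0 + t *\<^sub>R u)) mu) t0 :> policy_grad th_t0 \<bullet> u"
proof -
  have "DERIV (\<lambda>t. \<Sum>s\<in>UNIV. mu s * state_value (softmax (th0 + t *\<^sub>R u)) s) t0 :>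
      (\<Sum>s\<in>UNIV. mu s * (\<Sum>x\<in>UNIV. occupancy pi_t0 s x * path.dpol_qvalue x))"
    by (intro DERIV_sum DERIV_cmult path.state_value_deriv)
  also have "(\<Sum>s\<in>UNIV. mu s * (\<Sum>x\<in>UNIV. occupancy pi_t0 s x * path.dpol_qvalue x))
      = (\<Sum>x\<in>UNIV. rho pi_t0 x * path.dpol_qvalue x)"
    unfolding visitation_def sum_distrib_left sum_distrib_right mult.assoc by (rule sum.swap)
  also have "\<dots> = policy_grad th_t0 \<bullet> u"
    by (simp add: rho_mult_dpol_qvalue inner_vec_def sum_UNIV_prod mult.commute)
  finally show ?thesis by (simp add: Vmu_def Vs_eq_state_value is_policy_softmax)
qed

definition drho :: "'s \<Rightarrow> real" where
  "drho y = gamma * (\<Sum>x\<in>UNIV. \<Sum>z\<in>UNIV. rho pi_t0 x * path.dPpi x z * occupancy pi_t0 z y)"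

definition dvalue :: "'s \<Rightarrow> real" where
  "dvalue s = (\<Sum>x\<in>UNIV. occupancy pi_t0 s x * path.dpol_qvalue x)"

definition dqvalue :: "'s \<Rightarrow> 'a \<Rightarrow> real" where
  "dqvalue s a = gamma * (\<Sum>z\<in>UNIV. P s a z * dvalue z)"

definition policy_grad_deriv :: "real ^ ('s \<times> 'a)" where
  "policy_grad_deriv = (\<chi> i. case i of (s, a) \<Rightarrow>
     (drho s * pi_t0 s a + dpi s a * rho pi_t0 s) * (qvalue pi_t0 s a - state_value pi_t0 s)
     + (dqvalue s a - dvalue s) * (rho pi_t0 s * pi_t0 s a))"

lemma policy_grad_line_deriv:
  "DERIV (\<lambda>t. policy_grad (th0 + t *\<^sub>R u) $ i) t0 :> policy_grad_deriv $ i"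
proof -
  obtain s a where i: "i = (s, a)" by fastforce
  show ?thesis
    unfolding i policy_grad_nth policy_grad_deriv_def
    by (simp, intro DERIV_mult DERIV_diff path.deriv_pol
        path.visitation_deriv[of mu, folded drho_def]
        path.qvalue_deriv[folded dvalue_def, folded dqvalue_def]
        path.state_value_deriv[folded dvalue_def])
qed

lemma abs_u_minus_ubar_le: "\<bar>u $ (s, a) - ubar s\<bar> \<le> 2 * norm u"
proof -
  have "\<bar>ubar s\<bar> \<le> (\<Sum>b\<in>UNIV. pi_t0 s b * norm u)"
    unfolding ubar_def
    by (intro order.trans[OF sum_abs] sum_mono)
      (simp add: abs_mult abs_of_pos[OF softmax_pos] mult_left_mono[OF component_le_norm_cart] less_imp_le[OF softmax_pos])
  also have "\<dots> = norm u" by (simp add: softmax_sum flip: sum_distrib_right)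
  finally show ?thesis using component_le_norm_cart[of u "(s, a)"] by linarith
qed

lemma abs_dpi_le: "\<bar>dpi s a\<bar> \<le> 2 * norm u * pi_t0 s a"
  using mult_left_mono[OF abs_u_minus_ubar_le[of s a] less_imp_le[OF softmax_pos[of th_t0 s a]]]
  by (simp add: dpi_def abs_mult abs_of_pos[OF softmax_pos] mult.commute)

lemma abs_dPpi_le: "\<bar>path.dPpi x z\<bar> \<le> 2 * norm u * Ppi P pi_t0 x z"
proof -
  have "\<bar>path.dPpi x z\<bar> \<le> (\<Sum>a\<in>UNIV. 2 * norm u * pi_t0 x a * P x a z)"
    unfolding path.dPpi_def
    by (intro order.trans[OF sum_abs] sum_mono)
      (simp add: abs_mult abs_of_nonneg[OF P_nonneg] mult_right_mono[OF abs_dpi_le P_nonneg])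
  also have "\<dots> = 2 * norm u * Ppi P pi_t0 x z" by (simp add: Ppi_def sum_distrib_left mult.assoc)
  finally show ?thesis .
qed

lemma sum_softmax_abs_dqvalue_le:
  "(\<Sum>a\<in>UNIV. pi_t0 s a * \<bar>dqvalue s a\<bar>) \<le> gamma * (\<Sum>z\<in>UNIV. Ppi P pi_t0 s z * \<bar>dvalue z\<bar>)"
proof -
  have "\<bar>dqvalue s a\<bar> \<le> gamma * (\<Sum>z\<in>UNIV. P s a z * \<bar>dvalue z\<bar>)" for a
    unfolding dqvalue_def abs_mult abs_of_nonneg[OF gamma_nonneg]
    by (intro mult_left_mono gamma_nonneg order.trans[OF sum_abs] sum_mono) (simp add: abs_mult P_nonneg)
  then have "(\<Sum>a\<in>UNIV. pi_t0 s a * \<bar>dqvalue s a\<bar>)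
      \<le> (\<Sum>a\<in>UNIV. pi_t0 s a * (gamma * (\<Sum>z\<in>UNIV. P s a z * \<bar>dvalue z\<bar>)))"
    using softmax_pos[THEN less_imp_le] by (intro sum_mono mult_left_mono)
  also have "\<dots> = gamma * (\<Sum>z\<in>UNIV. Ppi P pi_t0 s z * \<bar>dvalue z\<bar>)"
    unfolding Ppi_def sum_distrib_left sum_distrib_right
    by (subst sum.swap) (simp add: mult_ac)
  finally show ?thesis .
qed

lemma sum_abs_dqvalue_minus_dvalue_le:
  "(\<Sum>a\<in>UNIV. \<bar>(dqvalue s a - dvalue s) * (rho pi_t0 s * pi_t0 s a)\<bar>)
    \<le> rho pi_t0 s * ((\<Sum>a\<in>UNIV. pi_t0 s a * \<bar>dqvalue s a\<bar>) + \<bar>dvalue s\<bar>)"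
proof -
  have "(\<Sum>a\<in>UNIV. \<bar>(dqvalue s a - dvalue s) * (rho pi_t0 s * pi_t0 s a)\<bar>)
      \<le> (\<Sum>a\<in>UNIV. (\<bar>dqvalue s a\<bar> + \<bar>dvalue s\<bar>) * (rho pi_t0 s * pi_t0 s a))"
  proof (rule sum_mono)
    fix a
    have "0 \<le> rho pi_t0 s * pi_t0 s a"
      using rho_pos[OF is_policy_softmax, of th_t0 s] softmax_pos[of th_t0 s a] by simp
    then show "\<bar>(dqvalue s a - dvalue s) * (rho pi_t0 s * pi_t0 s a)\<bar>
        \<le> (\<bar>dqvalue s a\<bar> + \<bar>dvalue s\<bar>) * (rho pi_t0 s * pi_t0 s a)"
      unfolding abs_mult_pos[OF \<open>0 \<le> rho pi_t0 s * pi_t0 s a\<close>, symmetric]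
      by (rule mult_right_mono[OF abs_triangle_ineq4])
  qed
  also have "\<dots> = rho pi_t0 s * (\<Sum>a\<in>UNIV. pi_t0 s a * \<bar>dqvalue s a\<bar>)
      + rho pi_t0 s * \<bar>dvalue s\<bar> * (\<Sum>a\<in>UNIV. pi_t0 s a)"
    by (simp add: algebra_simps sum.distrib sum_distrib_left sum_distrib_right)
  also have "\<dots> = rho pi_t0 s * ((\<Sum>a\<in>UNIV. pi_t0 s a * \<bar>dqvalue s a\<bar>) + \<bar>dvalue s\<bar>)"
    by (simp add: softmax_sum distrib_left)
  finally show ?thesis .
qed

(* The concentrability hypothesis; in the main theorem c = C_inf / (1 - gamma) - 1. *)
context
  fixes c :: real
  assumes c_nonneg: "0 \<le> c" and rho_le: "\<And>y. rho pi_t0 y \<le> (1 + c) * mu y"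
begin

lemma visitation_excess_le:
  "(\<Sum>z\<in>UNIV. (rho pi_t0 z - mu z) * f z) \<le> c * (\<Sum>z\<in>UNIV. mu z * f z)" if "\<And>z. 0 \<le> f z"
  unfolding sum_distrib_left
proof (rule sum_mono)
  fix z
  have "rho pi_t0 z - mu z \<le> c * mu z" using rho_le[of z] by (simp add: algebra_simps)
  then have "(rho pi_t0 z - mu z) * f z \<le> c * mu z * f z" by (rule mult_right_mono[OF _ that])
  then show "(rho pi_t0 z - mu z) * f z \<le> c * (mu z * f z)" by (simp add: mult.assoc)
qed

lemma abs_drho_le: "\<bar>drho y\<bar> \<le> 2 * c * norm u * rho pi_t0 y"
proof -
  let ?M = "occupancy pi_t0"
  have "\<bar>drho y\<bar> \<le> gamma * (\<Sum>x\<in>UNIV. \<Sum>z\<in>UNIV. \<bar>rho pi_t0 x * path.dPpi x z * ?M z y\<bar>)"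
    unfolding drho_def abs_mult[of gamma] abs_of_nonneg[OF gamma_nonneg]
    by (intro mult_left_mono gamma_nonneg order.trans[OF sum_abs] sum_mono sum_abs)
  also have "\<dots> \<le> gamma * (\<Sum>x\<in>UNIV. rho pi_t0 x * (\<Sum>z\<in>UNIV. Ppi P pi_t0 x z * (2 * norm u * ?M z y)))"
    unfolding sum_distrib_left abs_mult
  proof (intro mult_left_mono gamma_nonneg sum_mono)
    fix x z
    have "0 \<le> rho pi_t0 x * ?M z y"
      using rho_pos[OF is_policy_softmax] occupancy_nonneg[OF is_policy_softmax] by (simp add: less_imp_le)
    then have "\<bar>path.dPpi x z\<bar> * (rho pi_t0 x * ?M z y) \<le> 2 * norm u * Ppi P pi_t0 x z * (rho pi_t0 x * ?M z y)"
      by (rule mult_right_mono[OF abs_dPpi_le])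
    then show "\<bar>rho pi_t0 x\<bar> * \<bar>path.dPpi x z\<bar> * \<bar>?M z y\<bar> \<le> rho pi_t0 x * (Ppi P pi_t0 x z * (2 * norm u * ?M z y))"
      by (simp add: abs_of_pos[OF rho_pos[OF is_policy_softmax]] abs_of_nonneg[OF occupancy_nonneg[OF is_policy_softmax]]
          mult_ac)
  qed
  also have "\<dots> = (\<Sum>z\<in>UNIV. (rho pi_t0 z - mu z) * (2 * norm u * ?M z y))"
    by (rule visitation_transition_sum[OF is_policy_softmax])
  also have "\<dots> \<le> c * (\<Sum>z\<in>UNIV. mu z * (2 * norm u * ?M z y))"
    by (rule visitation_excess_le) (simp add: occupancy_nonneg[OF is_policy_softmax])
  also have "\<dots> = 2 * c * norm u * rho pi_t0 y"
    by (simp add: visitation_def sum_distrib_left mult_ac)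
  finally show ?thesis .
qed

lemma sum_rho_abs_dpol_qvalue_le:
  "(\<Sum>x\<in>UNIV. rho pi_t0 x * \<bar>path.dpol_qvalue x\<bar>) \<le> norm u * norm (policy_grad th_t0)"
proof -
  have "(\<Sum>x\<in>UNIV. rho pi_t0 x * \<bar>path.dpol_qvalue x\<bar>)
      = (\<Sum>x\<in>UNIV. \<bar>\<Sum>a\<in>UNIV. u $ (x, a) * policy_grad th_t0 $ (x, a)\<bar>)"
    using rho_pos[OF is_policy_softmax]
    by (simp add: abs_mult less_imp_le flip: rho_mult_dpol_qvalue)
  also have "\<dots> \<le> (\<Sum>i\<in>UNIV. \<bar>u $ i\<bar> * \<bar>policy_grad th_t0 $ i\<bar>)"
    unfolding sum_UNIV_prod by (intro sum_mono order.trans[OF sum_abs]) (simp add: abs_mult)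
  also have "\<dots> \<le> norm u * norm (policy_grad th_t0)" by (rule sum_abs_mult_le_norm_mult_cart)
  finally show ?thesis .
qed

lemma sum_mu_abs_dvalue_le: "(\<Sum>z\<in>UNIV. mu z * \<bar>dvalue z\<bar>) \<le> norm u * norm (policy_grad th_t0)"
proof -
  have "(\<Sum>z\<in>UNIV. mu z * \<bar>dvalue z\<bar>)
      \<le> (\<Sum>z\<in>UNIV. mu z * (\<Sum>x\<in>UNIV. occupancy pi_t0 z x * \<bar>path.dpol_qvalue x\<bar>))"
    unfolding dvalue_def using mu_pos occupancy_nonneg[OF is_policy_softmax]
    by (intro sum_mono mult_left_mono order.trans[OF sum_abs]) (auto simp: abs_mult less_imp_le)
  also have "\<dots> = (\<Sum>x\<in>UNIV. rho pi_t0 x * \<bar>path.dpol_qvalue x\<bar>)"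
    unfolding visitation_def sum_distrib_left sum_distrib_right mult.assoc by (rule sum.swap)
  also have "\<dots> \<le> norm u * norm (policy_grad th_t0)" by (rule sum_rho_abs_dpol_qvalue_le)
  finally show ?thesis .
qed

lemma sum_abs_dqvalue_dvalue_le:
  "(\<Sum>s\<in>UNIV. \<Sum>a\<in>UNIV. \<bar>(dqvalue s a - dvalue s) * (rho pi_t0 s * pi_t0 s a)\<bar>)
    \<le> (1 + 2 * c) * norm u * norm (policy_grad th_t0)"
proof -
  let ?dV = "\<lambda>z. \<bar>dvalue z\<bar>"
  have rho_nonneg: "0 \<le> rho pi_t0 s" for s using rho_pos[OF is_policy_softmax] less_imp_le by blast
  have "(\<Sum>s\<in>UNIV. \<Sum>a\<in>UNIV. \<bar>(dqvalue s a - dvalue s) * (rho pi_t0 s * pi_t0 s a)\<bar>)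
      \<le> (\<Sum>s\<in>UNIV. rho pi_t0 s * ((\<Sum>a\<in>UNIV. pi_t0 s a * \<bar>dqvalue s a\<bar>) + ?dV s))"
    by (intro sum_mono sum_abs_dqvalue_minus_dvalue_le)
  also have "\<dots> \<le> gamma * (\<Sum>s\<in>UNIV. rho pi_t0 s * (\<Sum>z\<in>UNIV. Ppi P pi_t0 s z * ?dV z))
      + (\<Sum>s\<in>UNIV. rho pi_t0 s * ?dV s)"
    unfolding distrib_left sum.distrib sum_distrib_left[of gamma]
    using rho_nonneg sum_softmax_abs_dqvalue_le
    by (intro add_mono sum_mono) (simp_all add: mult_left_mono mult.left_commute[of gamma])
  also have "\<dots> = (\<Sum>z\<in>UNIV. (rho pi_t0 z - mu z) * ?dV z) + (\<Sum>z\<in>UNIV. (rho pi_t0 z - mu z) * ?dV z)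
      + (\<Sum>z\<in>UNIV. mu z * ?dV z)"
  proof -
    have "(\<Sum>s\<in>UNIV. rho pi_t0 s * ?dV s) = (\<Sum>z\<in>UNIV. (rho pi_t0 z - mu z) * ?dV z) + (\<Sum>z\<in>UNIV. mu z * ?dV z)"
      by (simp add: algebra_simps flip: sum.distrib)
    then show ?thesis by (simp only: visitation_transition_sum[OF is_policy_softmax])
  qed
  also have "\<dots> \<le> (1 + 2 * c) * (\<Sum>z\<in>UNIV. mu z * ?dV z)"
    using visitation_excess_le[of ?dV] by (simp add: algebra_simps)
  also have "\<dots> \<le> (1 + 2 * c) * (norm u * norm (policy_grad th_t0))"
    using c_nonneg by (intro mult_left_mono sum_mu_abs_dvalue_le) simp
  finally show ?thesis by (simp add: mult.assoc)
qed

lemma norm_policy_grad_deriv_le: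
  "norm policy_grad_deriv \<le> (3 + 4 * c) * norm u * norm (policy_grad th_t0)"
proof -
  define X where "X = (\<chi> i. case i of (s, a) \<Rightarrow>
    (drho s * pi_t0 s a + dpi s a * rho pi_t0 s) * (qvalue pi_t0 s a - state_value pi_t0 s))"
  define Y where "Y = (\<chi> i. case i of (s, a) \<Rightarrow> (dqvalue s a - dvalue s) * (rho pi_t0 s * pi_t0 s a))"
  have "policy_grad_deriv = X + Y"
    unfolding policy_grad_deriv_def X_def Y_def by (simp add: vec_eq_iff split: prod.split)
  then have "norm policy_grad_deriv \<le> norm X + norm Y" by (simp add: norm_triangle_ineq)
  moreover have "norm X \<le> (2 * c * norm u + 2 * norm u) * norm (policy_grad th_t0)"
  proof (rule norm_le_scaled_componentwise_cart)
    fix i :: "'s \<times> 'a"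
    obtain s a where i: "i = (s, a)" by fastforce
    have rho: "0 < rho pi_t0 s" by (rule rho_pos[OF is_policy_softmax])
    have X_eq: "X $ i = (drho s / rho pi_t0 s + (u $ (s, a) - ubar s)) * policy_grad th_t0 $ i"
      unfolding X_def i policy_grad_nth dpi_def using rho by (simp add: field_simps)
    have "\<bar>drho s / rho pi_t0 s\<bar> \<le> 2 * c * norm u"
      using abs_drho_le[of s] rho by (simp add: abs_div pos_divide_le_eq)
    then have "\<bar>drho s / rho pi_t0 s + (u $ (s, a) - ubar s)\<bar> \<le> 2 * c * norm u + 2 * norm u"
      using abs_u_minus_ubar_le[of s a] abs_triangle_ineq[of "drho s / rho pi_t0 s" "u $ (s, a) - ubar s"]
      by linarith
    then show "\<bar>X $ i\<bar> \<le> (2 * c * norm u + 2 * norm u) * \<bar>policy_grad th_t0 $ i\<bar>"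
      unfolding X_eq abs_mult by (rule mult_right_mono) simp
  qed (use c_nonneg in simp)
  moreover have "norm Y \<le> (1 + 2 * c) * norm u * norm (policy_grad th_t0)"
  proof -
    have "norm Y \<le> (\<Sum>i\<in>UNIV. \<bar>Y $ i\<bar>)" by (rule norm_le_l1_cart)
    also have "\<dots> \<le> (1 + 2 * c) * norm u * norm (policy_grad th_t0)"
      unfolding sum_UNIV_prod Y_def by (simp add: sum_abs_dqvalue_dvalue_le)
    finally show ?thesis .
  qed
  ultimately have "norm policy_grad_deriv
      \<le> (2 * c * norm u + 2 * norm u) * norm (policy_grad th_t0) + (1 + 2 * c) * norm u * norm (policy_grad th_t0)"
    by linarith
  then show ?thesis by (simp add: algebra_simps)
qed

end

end

context mdp_start_dist
begin

theorem grad_value_softmax: "grad (\<lambda>th. Vmu P r gamma (softmax th) mu) th = policy_grad th"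
proof -
  have "deriv (\<lambda>t. Vmu P r gamma (softmax (th + t *\<^sub>R axis i 1)) mu) 0 = policy_grad th $ i" for i
  proof -
    interpret line: softmax_line P r gamma mu th "axis i 1" 0 by unfold_locales
    show ?thesis using DERIV_imp_deriv[OF line.value_line_deriv] by (simp add: inner_axis)
  qed
  then show ?thesis by (simp add: grad_def vec_eq_iff)
qed

lemma norm_policy_grad_line_le:
  fixes th v :: "real ^ ('s \<times> 'a)" and c T :: real
  assumes c_nonneg: "0 \<le> c" and rho_le: "\<And>th y. rho (softmax th) y \<le> (1 + c) * mu y"
    and "norm v = 1" and "0 \<le> T"
  shows "norm (policy_grad (th + T *\<^sub>R v)) \<le> exp ((3 + 4 * c) * T) * norm (policy_grad th)"
proof -
  define K where "K = 3 + 4 * c"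
  define phi where "phi t = (\<Sum>i\<in>UNIV. policy_grad (th + t *\<^sub>R v) $ i * policy_grad (th + t *\<^sub>R v) $ i)" for t
  have phi_eq: "phi t = (norm (policy_grad (th + t *\<^sub>R v)))\<^sup>2" for t
    by (simp add: phi_def power2_norm_eq_inner inner_vec_def)
  have "phi T \<le> exp (2 * K * T) * phi 0"
  proof (rule exp_growth_bound[OF _ \<open>0 \<le> T\<close>])
    fix t
    interpret line: softmax_line P r gamma mu th v t by unfold_locales
    let ?G = "policy_grad (th + t *\<^sub>R v)"
    have "DERIV phi t :> (\<Sum>i\<in>UNIV. line.policy_grad_deriv $ i * ?G $ i + line.policy_grad_deriv $ i * ?G $ i)"
      unfolding phi_def[abs_def] by (intro DERIV_sum DERIV_mult line.policy_grad_line_deriv)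
    moreover have "(\<Sum>i\<in>UNIV. line.policy_grad_deriv $ i * ?G $ i + line.policy_grad_deriv $ i * ?G $ i)
        = 2 * (line.policy_grad_deriv \<bullet> ?G)"
      by (simp add: inner_vec_def sum_distrib_left)
    moreover have "2 * (line.policy_grad_deriv \<bullet> ?G) \<le> 2 * K * phi t"
    proof -
      have "line.policy_grad_deriv \<bullet> ?G \<le> norm line.policy_grad_deriv * norm ?G"
        by (rule norm_cauchy_schwarz)
      also have "\<dots> \<le> K * norm v * norm ?G * norm ?G"
        unfolding K_def by (intro mult_right_mono line.norm_policy_grad_deriv_le c_nonneg rho_le) simp
      finally show ?thesis by (simp add: phi_eq \<open>norm v = 1\<close> power2_eq_square)
    qed
    ultimately show "\<exists>D. DERIV phi t :> D \<and> D \<le> 2 * K * phi t" by auto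
  qed
  then have "(norm (policy_grad (th + T *\<^sub>R v)))\<^sup>2 \<le> (exp (K * T) * norm (policy_grad th))\<^sup>2"
    by (simp add: phi_eq power_mult_distrib mult.assoc flip: exp_double)
  then show ?thesis unfolding K_def by (rule power2_le_imp_le) simp
qed

lemma norm_policy_grad_line_le_C_inf:
  fixes th v :: "real ^ ('s \<times> 'a)"
  assumes "norm v = 1" and "0 \<le> T"
  shows "norm (policy_grad (th + T *\<^sub>R v))
    \<le> exp ((4 * C_inf P gamma mu / (1 - gamma) - 1) * T) * norm (policy_grad th)"
proof -
  define c where "c = C_inf P gamma mu / (1 - gamma) - 1"
  have "0 \<le> c" using C_inf_ge gamma_less_1 by (simp add: c_def field_simps)
  moreover have "rho (softmax th') y \<le> (1 + c) * mu y" for th' y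
    using rho_le_C_inf[OF is_policy_softmax, of th' y] gamma_less_1 by (simp add: c_def field_simps)
  ultimately have "norm (policy_grad (th + T *\<^sub>R v)) \<le> exp ((3 + 4 * c) * T) * norm (policy_grad th)"
    using assms by (intro norm_policy_grad_line_le)
  then show ?thesis by (simp add: c_def algebra_simps)
qed

end

lemma stepsize_times_rate:
  fixes gamma C :: real
  assumes "gamma < 1" and "1 - gamma \<le> C"
  shows "(4 * C / (1 - gamma) - 1) * ((1 - gamma) / (6 * (1 - gamma) + 8 * (C - (1 - gamma)))) = 1 / 2"
proof -
  have "4 * C / (1 - gamma) - 1 = (4 * C - (1 - gamma)) / (1 - gamma)"
    using assms(1) by (simp add: field_simps)
  moreover have "6 * (1 - gamma) + 8 * (C - (1 - gamma)) = 2 * (4 * C - (1 - gamma))" by simp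
  moreover have "0 < 4 * C - (1 - gamma)" using assms by simp
  ultimately show ?thesis using assms(1) by simp
qed

theorem lemma7:
  fixes P :: "'s::finite \<Rightarrow> 'a::finite \<Rightarrow> 's \<Rightarrow> real"
    and r :: "'s \<Rightarrow> 'a \<Rightarrow> real" and gamma :: real and mu :: "'s \<Rightarrow> real"
    and theta :: "real ^ ('s \<times> 'a)" and zeta :: real
  assumes mdp: "is_MDP P r gamma"
    and mu_pos: "\<forall>s. mu s > 0" and mu_sum: "(\<Sum>s\<in>UNIV. mu s) = 1"
    and grad_nz: "grad (\<lambda>th. Vmu P r gamma (softmax th) mu) theta \<noteq> 0"
    and zeta: "0 \<le> zeta" "zeta \<le> 1"
  shows
    "let V = (\<lambda>th. Vmu P r gamma (softmax th) mu);
         g = grad V theta;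
         C = C_inf P gamma mu;
         eta = (1 - gamma) / (6 * (1 - gamma) + 8 * (C - (1 - gamma))) * (1 / sqrt (real CARD('s)));
         theta' = theta + eta *\<^sub>R (g /\<^sub>R norm g);
         theta_zeta = theta + zeta *\<^sub>R (theta' - theta)
     in norm (grad V theta_zeta) \<le> 2 * norm g"
proof -
  interpret mdp_start_dist P r gamma mu using mdp mu_pos mu_sum by unfold_locales auto
  define g where "g = policy_grad theta"
  define C where "C = C_inf P gamma mu"
  define eta where "eta = (1 - gamma) / (6 * (1 - gamma) + 8 * (C - (1 - gamma))) * (1 / sqrt (real CARD('s)))"
  define K where "K = 4 * C / (1 - gamma) - 1"
  have "1 - gamma \<le> C" unfolding C_def by (rule C_inf_ge)
  then have "0 \<le> eta" "0 \<le> K"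
    unfolding eta_def K_def using gamma_less_1
    by (intro mult_nonneg_nonneg divide_nonneg_pos, auto simp: field_simps)
  then have "0 \<le> K * eta" by simp
  moreover have "K * eta \<le> 1 / 2 * 1"
    unfolding K_def eta_def mult.assoc[symmetric] stepsize_times_rate[OF gamma_less_1 \<open>1 - gamma \<le> C\<close>]
    by (intro mult_left_mono) auto
  ultimately have "K * (zeta * eta) \<le> 1 / 2"
    using mult_left_le_one_le[of "K * eta" zeta] zeta by (simp add: mult.left_commute)
  then have "exp (K * (zeta * eta)) \<le> exp (1 / 2)" by simp
  also have "\<dots> \<le> 2" using exp_bound_lemma[of "1 / 2 :: real"] by simp
  finally have "exp (K * (zeta * eta)) \<le> 2" .
  have "g \<noteq> 0" using grad_nz by (simp add: g_def grad_value_softmax)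
  have "norm (policy_grad (theta + (zeta * eta) *\<^sub>R (g /\<^sub>R norm g))) \<le> exp (K * (zeta * eta)) * norm g"
    unfolding K_def C_def g_def using \<open>g \<noteq> 0\<close> \<open>0 \<le> eta\<close> zeta
    by (intro norm_policy_grad_line_le_C_inf) (auto simp: g_def)
  also have "\<dots> \<le> 2 * norm g" using \<open>exp (K * (zeta * eta)) \<le> 2\<close> by (simp add: mult_right_mono)
  finally have "norm (policy_grad (theta + zeta *\<^sub>R ((theta + eta *\<^sub>R (g /\<^sub>R norm g)) - theta))) \<le> 2 * norm g"
    by (simp add: mult.assoc)
  then show ?thesis unfolding Let_def grad_value_softmax g_def eta_def C_def .
qed

end
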